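(* Let $(D,\sqsubseteq)$ be a dcpo with its Scott topology, let $B\subseteq D$, and let $A\in\mathbf{\Delta}^0_2(D)$. Then every $\sqsubseteq$-increasing $B$-tree $f:T\to B$ that is $(A,\varepsilon)$-alternating for some $\varepsilon\in\{0,1\}$ is well-founded.
   Context: Dcpo: poset where every nonempty directed subset has a supremum; Scott topology: open sets are upsets $O$ such that every directed set with supremum in $O$ meets $O$. $\mathbf{\Sigma}^0_2(D)$: countable unions of differences $U\setminus V$ of Scott open sets; $\mathbf{\Pi}^0_2(D)$: complements; $\mathbf{\Delta}^0_2(D)=\mathbf{\Sigma}^0_2(D)\cap\mathbf{\Pi}^0_2(D)$. A tree is a nonempty set of finite sequences (over some set) closed under prefixes; it is well-founded if it has no infinite branch (no infinite sequence all of whose finite prefixes lie in $T$). A $B$-tree is a map $f:T\to B$ with $T$ a tree. It is $(A,\varepsilon)$-alternating if ($f(\mathit{nil})\in A$ iff $\varepsilon=1$) and for all $\sigma,\sigma a\in T$ (where $\sigma a$ is $\sigma$ extended by one element $a$), $f(\sigma a)\in A\iff f(\sigma)\notin A$. It is $\sqsubseteq$-increasing if $f(\sigma)\sqsubseteq f(\sigma a)$ whenever $\sigma,\sigma a\in T$. *)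

theory Defs
  imports Main
begin

text \<open>Posets are modelled by a type of class order; the dcpo D is the whole type.\<close>

definition directed :: "'a::order set \<Rightarrow> bool" where
  "directed S \<longleftrightarrow> S \<noteq> {} \<and> (\<forall>x\<in>S. \<forall>y\<in>S. \<exists>z\<in>S. x \<le> z \<and> y \<le> z)"

definition is_sup :: "'a::order set \<Rightarrow> 'a \<Rightarrow> bool" where
  "is_sup S s \<longleftrightarrow> (\<forall>x\<in>S. x \<le> s) \<and> (\<forall>u. (\<forall>x\<in>S. x \<le> u) \<longrightarrow> s \<le> u)"

definition dcpo :: "'a::order itself \<Rightarrow> bool" where
  "dcpo _ \<longleftrightarrow> (\<forall>S::'a set. directed S \<longrightarrow> (\<exists>s. is_sup S s))"

definition scott_open :: "'a::order set \<Rightarrow> bool" where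
  "scott_open U \<longleftrightarrow> (\<forall>x y. x \<in> U \<longrightarrow> x \<le> y \<longrightarrow> y \<in> U) \<and>
     (\<forall>S s. directed S \<longrightarrow> is_sup S s \<longrightarrow> s \<in> U \<longrightarrow> S \<inter> U \<noteq> {})"

definition Sigma02 :: "'a::order set set" where
  "Sigma02 = {A. \<exists>U V :: nat \<Rightarrow> 'a set. (\<forall>n. scott_open (U n) \<and> scott_open (V n)) \<and>
                   A = (\<Union>n. U n - V n)}"

definition Pi02 :: "'a::order set set" where
  "Pi02 = {A. - A \<in> Sigma02}"

definition Delta02 :: "'a::order set set" where
  "Delta02 = Sigma02 \<inter> Pi02"

text \<open>Trees over a set of labels (type 'b); \<sigma> a is \<sigma> @ [a].\<close>

definition is_tree :: "'b list set \<Rightarrow> bool" where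
  "is_tree T \<longleftrightarrow> T \<noteq> {} \<and> (\<forall>\<sigma> \<tau>. \<sigma> @ \<tau> \<in> T \<longrightarrow> \<sigma> \<in> T)"

definition well_founded_tree :: "'b list set \<Rightarrow> bool" where
  "well_founded_tree T \<longleftrightarrow> \<not> (\<exists>g :: nat \<Rightarrow> 'b. \<forall>n. map g [0..<n] \<in> T)"

definition B_tree :: "'a set \<Rightarrow> 'b list set \<Rightarrow> ('b list \<Rightarrow> 'a) \<Rightarrow> bool" where
  "B_tree B T f \<longleftrightarrow> is_tree T \<and> f ` T \<subseteq> B"

definition alternating :: "'a set \<Rightarrow> nat \<Rightarrow> 'b list set \<Rightarrow> ('b list \<Rightarrow> 'a) \<Rightarrow> bool" where
  "alternating A \<epsilon> T f \<longleftrightarrow> (f [] \<in> A \<longleftrightarrow> \<epsilon> = 1) \<and>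
     (\<forall>\<sigma> a. \<sigma> \<in> T \<longrightarrow> \<sigma> @ [a] \<in> T \<longrightarrow> (f (\<sigma> @ [a]) \<in> A \<longleftrightarrow> f \<sigma> \<notin> A))"

definition increasing_tree :: "'b list set \<Rightarrow> ('b list \<Rightarrow> 'a::order) \<Rightarrow> bool" where
  "increasing_tree T f \<longleftrightarrow> (\<forall>\<sigma> a. \<sigma> \<in> T \<longrightarrow> \<sigma> @ [a] \<in> T \<longrightarrow> f \<sigma> \<le> f (\<sigma> @ [a]))"

end

theory Submission
  imports Defs
begin

text \<open>Along an infinite branch the labels form an increasing chain that alternates in and out
  of A. In a dcpo the chain has a supremum s, lying in A or in its complement, both of which are
  countable unions of differences U - V of Scott open sets. If s \<in> U - V, the chain enters the
  Scott open U and stays there, and it never meets the upset V since it lies below s. So the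
  chain is eventually inside A or eventually outside A, contradicting alternation.\<close>

lemma directed_range_chain:
  fixes x :: "nat \<Rightarrow> 'a::order"
  assumes "\<And>n. x n \<le> x (Suc n)"
  shows "directed (range x)"
  unfolding directed_def
proof (intro conjI ballI)
  show "range x \<noteq> {}" by simp
next
  have mono: "x i \<le> x j" if "i \<le> j" for i j
    using lift_Suc_mono_le[of x, OF assms that] .
  fix a b assume "a \<in> range x" "b \<in> range x"
  then obtain i j where "a = x i" "b = x j" by blast
  then show "\<exists>z\<in>range x. a \<le> z \<and> b \<le> z"
    using mono[of i "max i j"] mono[of j "max i j"] by auto
qed

lemma scott_open_upward:
  assumes "scott_open U" "x \<in> U" "x \<le> y"
  shows "y \<in> U"
  using assms unfolding scott_open_def by blast

lemma scott_open_meets_chain: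
  fixes x :: "nat \<Rightarrow> 'a::order"
  assumes "scott_open U" "\<And>n. x n \<le> x (Suc n)" "is_sup (range x) s" "s \<in> U"
  obtains N where "x N \<in> U"
  using assms directed_range_chain[of x, OF assms(2)] unfolding scott_open_def by blast

lemma Sigma02_chain_eventually:
  fixes x :: "nat \<Rightarrow> 'a::order"
  assumes "C \<in> Sigma02" and chain: "\<And>n. x n \<le> x (Suc n)"
    and sup: "is_sup (range x) s" and "s \<in> C"
  shows "\<exists>N. \<forall>m\<ge>N. x m \<in> C"
proof -
  obtain U V :: "nat \<Rightarrow> 'a set" where open_UV: "\<And>n. scott_open (U n) \<and> scott_open (V n)"
    and C_eq: "C = (\<Union>n. U n - V n)"
    using \<open>C \<in> Sigma02\<close> unfolding Sigma02_def by blast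
  obtain k where "s \<in> U k" "s \<notin> V k" using \<open>s \<in> C\<close> C_eq by blast
  obtain N where "x N \<in> U k"
    using scott_open_meets_chain[OF _ chain sup \<open>s \<in> U k\<close>] open_UV by blast
  have "x m \<in> U k - V k" if "m \<ge> N" for m
  proof
    show "x m \<in> U k"
      using scott_open_upward[OF _ \<open>x N \<in> U k\<close> lift_Suc_mono_le[of x, OF chain that]] open_UV
      by blast
    have "x m \<le> s" using sup unfolding is_sup_def by blast
    then show "x m \<notin> V k"
      using scott_open_upward[of "V k" "x m" s] open_UV \<open>s \<notin> V k\<close> by blast
  qed
  then show ?thesis using C_eq by blast
qed

lemma Delta02_no_alternating_chain:
  fixes x :: "nat \<Rightarrow> 'a::order"
  assumes "dcpo TYPE('a)" "A \<in> Delta02"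
    and chain: "\<And>n. x n \<le> x (Suc n)"
  shows "\<not> (\<forall>n. x (Suc n) \<in> A \<longleftrightarrow> x n \<notin> A)"
proof
  assume alt: "\<forall>n. x (Suc n) \<in> A \<longleftrightarrow> x n \<notin> A"
  obtain s where sup: "is_sup (range x) s"
    using assms(1) directed_range_chain[of x, OF chain] unfolding dcpo_def by blast
  have "A \<in> Sigma02" "- A \<in> Sigma02"
    using assms(2) unfolding Delta02_def Pi02_def by auto
  show False
  proof (cases "s \<in> A")
    case True
    then obtain N where "\<forall>m\<ge>N. x m \<in> A"
      using Sigma02_chain_eventually[OF \<open>A \<in> Sigma02\<close> chain sup] by blast
    then show False using alt by (metis le_Suc_eq order_refl)
  next
    case False
    then obtain N where "\<forall>m\<ge>N. x m \<in> - A"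
      using Sigma02_chain_eventually[OF \<open>- A \<in> Sigma02\<close> chain sup] by blast
    then show False using alt by (metis ComplD le_Suc_eq order_refl)
  qed
qed

lemma branch_labels_alternating_chain:
  assumes "increasing_tree T f" "alternating A \<epsilon> T f"
    and branch: "\<And>n. map g [0..<n] \<in> T"
  defines "x \<equiv> \<lambda>n. f (map g [0..<n])"
  shows "x n \<le> x (Suc n)" and "x (Suc n) \<in> A \<longleftrightarrow> x n \<notin> A"
proof -
  have step: "map g [0..<Suc n] = map g [0..<n] @ [g n]" by simp
  show "x n \<le> x (Suc n)"
    using assms(1) branch[of n] branch[of "Suc n"]
    unfolding x_def step increasing_tree_def by simp
  show "x (Suc n) \<in> A \<longleftrightarrow> x n \<notin> A"
    using assms(2) branch[of n] branch[of "Suc n"]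
    unfolding x_def step alternating_def by simp
qed

text \<open>Neither the label set B nor the value of \<epsilon> plays a role: alternation along a branch
  already contradicts membership in Delta02.\<close>

theorem proposition4p6:
  fixes B A :: "'a::order set" and T :: "'b list set" and f :: "'b list \<Rightarrow> 'a" and \<epsilon> :: nat
  assumes "dcpo TYPE('a)"
    and "A \<in> Delta02"
    and "B_tree B T f"
    and "increasing_tree T f"
    and "\<epsilon> \<in> {0, 1}"
    and "alternating A \<epsilon> T f"
  shows "well_founded_tree T"
  unfolding well_founded_tree_def
proof
  assume "\<exists>g :: nat \<Rightarrow> 'b. \<forall>n. map g [0..<n] \<in> T"
  then obtain g :: "nat \<Rightarrow> 'b" where "\<And>n. map g [0..<n] \<in> T" by blast
  note branch = branch_labels_alternating_chain[OF assms(4,6) this]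
  show False
    using Delta02_no_alternating_chain[where x="\<lambda>n. f (map g [0..<n])", OF assms(1,2) branch(1)]
      branch(2) by blast
qed

end
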